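(* Let $\mathcal{D}=\{(X_i,B_i):i\in I\}$ be a collection of random variable/nonempty event pairs with coherent$_1$ conditional previsions $\{P(X_i\mid B_i):i\in I\}$, and let $X$ be a random variable on $\Omega$. Then there exist extended real numbers $a\le b$ such that, for an extended real number $p$, the previsions in $\mathcal{D}$ together with $P(X\mid\Omega)=p$ are coherent$_1$ if and only if $p\in[a,b]$ (the closed interval in the extended reals).
   Context: Let $\Omega$ be a nonempty set of states $\omega$; events are subsets of $\Omega$ and random variables are real-valued functions on $\Omega$. An event $B$ is identified with its indicator function. A conditional prevision $P(X\mid B)$ is an extended real number. Coherence$_1$: a collection $\{P(X_i\mid B_i):i\in I\}$ is coherent$_1$ if for every finite $\{i_1,\dots,i_n\}\subseteq I$, all real $\alpha_1,\dots,\alpha_n$ with $\alpha_j\ge 0$ whenever $P(X_{i_j}\mid B_{i_j})=+\infty$ and $\alpha_j\le 0$ whenever $P(X_{i_j}\mid B_{i_j})=-\infty$, and all real $c_1,\dots,c_n$ with $c_j=P(X_{i_j}\mid B_{i_j})$ whenever that prevision is finite, we have $\sup_\omega \sum_{j=1}^n \alpha_j B_{i_j}(\omega)[X_{i_j}(\omega)-c_j]\ge 0$. *)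

theory Defs
  imports Complex_Main "HOL-Library.Extended_Real" "HOL-Library.Indicator_Function"
begin

text \<open>States are the elements of the type 'w (so Omega = UNIV, nonempty).
  A family of conditional previsions P(X i | B i), i in I, with
  X :: 'i => 'w => real, B :: 'i => 'w set, P :: 'i => ereal.\<close>

definition coherent1 ::
  "'i set \<Rightarrow> ('i \<Rightarrow> 'w \<Rightarrow> real) \<Rightarrow> ('i \<Rightarrow> 'w set) \<Rightarrow> ('i \<Rightarrow> ereal) \<Rightarrow> bool" where
  "coherent1 I X B P \<longleftrightarrow>
     (\<forall>J (\<alpha> :: 'i \<Rightarrow> real) (c :: 'i \<Rightarrow> real).
        finite J \<and> J \<subseteq> I \<and>
        (\<forall>j\<in>J. P j = \<infinity> \<longrightarrow> \<alpha> j \<ge> 0) \<and>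
        (\<forall>j\<in>J. P j = -\<infinity> \<longrightarrow> \<alpha> j \<le> 0) \<and>
        (\<forall>j\<in>J. \<bar>P j\<bar> \<noteq> \<infinity> \<longrightarrow> ereal (c j) = P j)
        \<longrightarrow> (SUP \<omega>. ereal (\<Sum>j\<in>J. \<alpha> j * indicator (B j) \<omega> * (X j \<omega> - c j))) \<ge> 0)"

end

theory Submission
  imports Defs
begin

text \<open>The gambles \<open>\<Sum> \<alpha>\<^sub>j B\<^sub>j (X\<^sub>j - c\<^sub>j)\<close> built from admissible bets on the given previsions
  form a convex cone \<open>G\<close>, and coherence says each of them has nonnegative supremum. A bet
  \<open>\<alpha> (Y - c)\<close> with \<open>\<alpha> > 0\<close> keeps all suprema nonnegative iff \<open>c\<close> is at most the upper natural
  extension \<open>inf\<^sub>g\<^sub>\<in>\<^sub>G sup (Y + g)\<close>, and with \<open>\<alpha> < 0\<close> iff \<open>c\<close> is at least the lower natural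
  extension. Hence the admissible values of \<open>P(Y|\<Omega>)\<close>, infinite ones included, form the closed
  interval between the two extensions, which are ordered because \<open>G\<close> is closed under sums.\<close>

definition admissible_bet :: "ereal \<Rightarrow> real \<Rightarrow> real \<Rightarrow> bool" where
  "admissible_bet p \<alpha> c \<longleftrightarrow>
     (p = \<infinity> \<longrightarrow> 0 \<le> \<alpha>) \<and> (p = -\<infinity> \<longrightarrow> \<alpha> \<le> 0) \<and> (\<bar>p\<bar> \<noteq> \<infinity> \<longrightarrow> ereal c = p)"

definition gamble ::
  "('i \<Rightarrow> 'w \<Rightarrow> real) \<Rightarrow> ('i \<Rightarrow> 'w set) \<Rightarrow> 'i set \<Rightarrow> ('i \<Rightarrow> real) \<Rightarrow> ('i \<Rightarrow> real) \<Rightarrow> 'w \<Rightarrow> real"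
  where "gamble X B J \<alpha> c \<omega> = (\<Sum>j\<in>J. \<alpha> j * indicator (B j) \<omega> * (X j \<omega> - c j))"

definition gambles ::
  "'i set \<Rightarrow> ('i \<Rightarrow> 'w \<Rightarrow> real) \<Rightarrow> ('i \<Rightarrow> 'w set) \<Rightarrow> ('i \<Rightarrow> ereal) \<Rightarrow> ('w \<Rightarrow> real) set"
  where "gambles I X B P =
    {gamble X B J \<alpha> c | J \<alpha> c. finite J \<and> J \<subseteq> I \<and> (\<forall>j\<in>J. admissible_bet (P j) (\<alpha> j) (c j))}"

definition esup :: "('w \<Rightarrow> real) \<Rightarrow> ereal" where
  "esup f = (SUP \<omega>. ereal (f \<omega>))"

lemma coherent1_iff_gambles: "coherent1 I X B P \<longleftrightarrow> (\<forall>g\<in>gambles I X B P. 0 \<le> esup g)"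
proof -
  have "(\<forall>g\<in>gambles I X B P. 0 \<le> esup g) \<longleftrightarrow>
      (\<forall>J \<alpha> c. finite J \<and> J \<subseteq> I \<and> (\<forall>j\<in>J. admissible_bet (P j) (\<alpha> j) (c j))
         \<longrightarrow> 0 \<le> esup (gamble X B J \<alpha> c))"
    by (auto simp: gambles_def)
  then show ?thesis
    unfolding coherent1_def admissible_bet_def esup_def gamble_def by (simp add: ball_conj_distrib)
qed

lemma admissible_bet_zero: "admissible_bet p 0 (real_of_ereal p)"
  by (cases p) (auto simp: admissible_bet_def)

lemma admissible_bet_divide:
  "admissible_bet p \<alpha> c \<Longrightarrow> (t::real) > 0 \<Longrightarrow> admissible_bet p (\<alpha> / t) c"
  by (auto simp: admissible_bet_def divide_nonpos_pos)

text \<open>For an infinite prevision the two stakes share a sign, so they cancel only if both vanish;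
  otherwise the merged price is the stake-weighted mean of the two prices.\<close>

lemma admissible_bet_merge:
  assumes bet1: "admissible_bet p \<alpha>1 c1" and bet2: "admissible_bet p \<alpha>2 c2"
  obtains \<alpha> c where "admissible_bet p \<alpha> c"
    and "\<And>x::real. \<alpha>1 * (x - c1) + \<alpha>2 * (x - c2) = \<alpha> * (x - c)"
proof (cases "\<bar>p\<bar> = \<infinity>")
  case False
  then have "c1 = real_of_ereal p" "c2 = real_of_ereal p"
    using bet1 bet2 by (auto simp: admissible_bet_def)
  with bet1 bet2 show ?thesis
    by (intro that[of "\<alpha>1 + \<alpha>2" "real_of_ereal p"]) (auto simp: admissible_bet_def algebra_simps)
next
  case True
  show ?thesis
  proof (cases "\<alpha>1 + \<alpha>2 = 0")
    case True
    with \<open>\<bar>p\<bar> = \<infinity>\<close> bet1 bet2 have "\<alpha>1 = 0" "\<alpha>2 = 0"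
      by (auto simp: admissible_bet_def)
    then show ?thesis
      using admissible_bet_zero by (intro that[of 0 "real_of_ereal p"]) auto
  next
    case False
    with \<open>\<bar>p\<bar> = \<infinity>\<close> bet1 bet2 show ?thesis
      by (intro that[of "\<alpha>1 + \<alpha>2" "(\<alpha>1 * c1 + \<alpha>2 * c2) / (\<alpha>1 + \<alpha>2)"])
        (auto simp: admissible_bet_def field_simps)
  qed
qed

lemma gamble_pad:
  assumes "finite K" "J \<subseteq> K" "\<forall>j\<in>J. admissible_bet (P j) (\<alpha> j) (c j)"
  obtains \<alpha>' c' where "\<forall>j\<in>K. admissible_bet (P j) (\<alpha>' j) (c' j)"
    and "gamble X B J \<alpha> c = gamble X B K \<alpha>' c'"
proof
  let ?\<alpha>' = "\<lambda>j. if j \<in> J then \<alpha> j else 0"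
  let ?c' = "\<lambda>j. if j \<in> J then c j else real_of_ereal (P j)"
  show "\<forall>j\<in>K. admissible_bet (P j) (?\<alpha>' j) (?c' j)"
    using assms(3) admissible_bet_zero by auto
  show "gamble X B J \<alpha> c = gamble X B K ?\<alpha>' ?c'"
    unfolding gamble_def fun_eq_iff
    by (intro allI sum.mono_neutral_cong_left) (use assms(1,2) in auto)
qed

lemma gambles_divide:
  assumes "g \<in> gambles I X B P" "(t::real) > 0"
  shows "(\<lambda>\<omega>. g \<omega> / t) \<in> gambles I X B P"
proof -
  obtain J \<alpha> c where "finite J" "J \<subseteq> I" "\<forall>j\<in>J. admissible_bet (P j) (\<alpha> j) (c j)"
    and g: "g = gamble X B J \<alpha> c"
    using assms(1) by (auto simp: gambles_def)
  moreover have "(\<lambda>\<omega>. g \<omega> / t) = gamble X B J (\<lambda>j. \<alpha> j / t) c"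
    by (auto simp: g gamble_def sum_divide_distrib)
  ultimately show ?thesis
    using assms(2) admissible_bet_divide unfolding gambles_def by blast
qed

lemma gamble_merge:
  assumes bets1: "\<forall>j\<in>K. admissible_bet (P j) (\<alpha>1 j) (c1 j)"
    and bets2: "\<forall>j\<in>K. admissible_bet (P j) (\<alpha>2 j) (c2 j)"
  obtains \<alpha> c where "\<forall>j\<in>K. admissible_bet (P j) (\<alpha> j) (c j)"
    and "\<And>\<omega>. gamble X B K \<alpha>1 c1 \<omega> + gamble X B K \<alpha>2 c2 \<omega> = gamble X B K \<alpha> c \<omega>"
proof -
  have "\<forall>j\<in>K. \<exists>\<alpha> c. admissible_bet (P j) \<alpha> c \<and>
      (\<forall>x::real. \<alpha>1 j * (x - c1 j) + \<alpha>2 j * (x - c2 j) = \<alpha> * (x - c))"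
  proof
    fix j assume "j \<in> K"
    with bets1 bets2 obtain \<alpha> c where "admissible_bet (P j) \<alpha> c"
      and "\<And>x::real. \<alpha>1 j * (x - c1 j) + \<alpha>2 j * (x - c2 j) = \<alpha> * (x - c)"
      using admissible_bet_merge by metis
    then show "\<exists>\<alpha> c. admissible_bet (P j) \<alpha> c \<and>
      (\<forall>x::real. \<alpha>1 j * (x - c1 j) + \<alpha>2 j * (x - c2 j) = \<alpha> * (x - c))" by blast
  qed
  then obtain \<alpha> c where bets: "\<forall>j\<in>K. admissible_bet (P j) (\<alpha> j) (c j)"
    and merged: "\<And>j x. j \<in> K \<Longrightarrow> \<alpha>1 j * (x - c1 j) + \<alpha>2 j * (x - c2 j) = \<alpha> j * (x - c j)"
    by (metis bchoice)
  have "\<alpha>1 j * indicator (B j) \<omega> * (X j \<omega> - c1 j) + \<alpha>2 j * indicator (B j) \<omega> * (X j \<omega> - c2 j)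
      = \<alpha> j * indicator (B j) \<omega> * (X j \<omega> - c j)" if "j \<in> K" for j \<omega>
  proof -
    have "\<alpha>1 j * indicator (B j) \<omega> * (X j \<omega> - c1 j) + \<alpha>2 j * indicator (B j) \<omega> * (X j \<omega> - c2 j)
        = indicator (B j) \<omega> * (\<alpha>1 j * (X j \<omega> - c1 j) + \<alpha>2 j * (X j \<omega> - c2 j))"
      by (simp add: algebra_simps)
    also have "\<dots> = \<alpha> j * indicator (B j) \<omega> * (X j \<omega> - c j)"
      by (simp add: merged[OF that])
    finally show ?thesis .
  qed
  then have "gamble X B K \<alpha>1 c1 \<omega> + gamble X B K \<alpha>2 c2 \<omega> = gamble X B K \<alpha> c \<omega>" for \<omega>
    unfolding gamble_def sum.distrib[symmetric] by (intro sum.cong) auto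
  with bets show ?thesis
    using that by blast
qed

lemma gambles_add:
  assumes "g1 \<in> gambles I X B P" "g2 \<in> gambles I X B P"
  shows "(\<lambda>\<omega>. g1 \<omega> + g2 \<omega>) \<in> gambles I X B P"
proof -
  obtain J1 \<alpha>1 c1 where J1: "finite J1" "J1 \<subseteq> I" "\<forall>j\<in>J1. admissible_bet (P j) (\<alpha>1 j) (c1 j)"
    and g1: "g1 = gamble X B J1 \<alpha>1 c1"
    using assms(1) by (auto simp: gambles_def)
  obtain J2 \<alpha>2 c2 where J2: "finite J2" "J2 \<subseteq> I" "\<forall>j\<in>J2. admissible_bet (P j) (\<alpha>2 j) (c2 j)"
    and g2: "g2 = gamble X B J2 \<alpha>2 c2"
    using assms(2) by (auto simp: gambles_def)
  let ?K = "J1 \<union> J2"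
  obtain \<alpha>1' c1' where bets1: "\<forall>j\<in>?K. admissible_bet (P j) (\<alpha>1' j) (c1' j)"
    and g1': "g1 = gamble X B ?K \<alpha>1' c1'"
    using gamble_pad[of ?K J1 P \<alpha>1 c1 X B] J1 J2 g1 by auto
  obtain \<alpha>2' c2' where bets2: "\<forall>j\<in>?K. admissible_bet (P j) (\<alpha>2' j) (c2' j)"
    and g2': "g2 = gamble X B ?K \<alpha>2' c2'"
    using gamble_pad[of ?K J2 P \<alpha>2 c2 X B] J1 J2 g2 by auto
  obtain \<alpha> c where bets: "\<forall>j\<in>?K. admissible_bet (P j) (\<alpha> j) (c j)"
    and "\<And>\<omega>. gamble X B ?K \<alpha>1' c1' \<omega> + gamble X B ?K \<alpha>2' c2' \<omega> = gamble X B ?K \<alpha> c \<omega>"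
    using gamble_merge[OF bets1 bets2, where X=X and B=B] by blast
  then have "(\<lambda>\<omega>. g1 \<omega> + g2 \<omega>) = gamble X B ?K \<alpha> c"
    by (simp add: g1' g2')
  with J1 J2 bets show ?thesis
    unfolding gambles_def by blast
qed

lemma gamble_insert_None:
  assumes "finite J"
  shows "gamble (case_option Y X) (case_option UNIV B) (insert None (Some ` J))
           (case_option \<alpha>0 \<alpha>) (case_option c0 c) \<omega>
         = \<alpha>0 * (Y \<omega> - c0) + gamble X B J \<alpha> c \<omega>"
  using assms by (simp add: gamble_def sum.reindex)

lemma gambles_insert_None:
  "gambles (insert None (Some ` I)) (case_option Y X) (case_option UNIV B) (case_option p P)
   = {\<lambda>\<omega>. \<alpha>0 * (Y \<omega> - c0) + g \<omega> | \<alpha>0 c0 g. admissible_bet p \<alpha>0 c0 \<and> g \<in> gambles I X B P}"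
  (is "?G' = ?R")
proof
  show "?R \<subseteq> ?G'"
  proof
    fix h assume "h \<in> ?R"
    then obtain \<alpha>0 c0 J \<alpha> c where bet0: "admissible_bet p \<alpha>0 c0"
      and J: "finite J" "J \<subseteq> I" "\<forall>j\<in>J. admissible_bet (P j) (\<alpha> j) (c j)"
      and h: "h = (\<lambda>\<omega>. \<alpha>0 * (Y \<omega> - c0) + gamble X B J \<alpha> c \<omega>)"
      by (auto simp: gambles_def)
    then have "h = gamble (case_option Y X) (case_option UNIV B) (insert None (Some ` J))
                     (case_option \<alpha>0 \<alpha>) (case_option c0 c)"
      by (simp add: fun_eq_iff gamble_insert_None)
    with bet0 J show "h \<in> ?G'"
      unfolding gambles_def
      by (intro CollectI exI[of _ "insert None (Some ` J)"] exI[of _ "case_option \<alpha>0 \<alpha>"]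
          exI[of _ "case_option c0 c"]) auto
  qed
next
  show "?G' \<subseteq> ?R"
  proof
    fix h assume "h \<in> ?G'"
    then obtain K \<beta> d where K: "finite K" "K \<subseteq> insert None (Some ` I)"
      and bets: "\<forall>j\<in>K. admissible_bet (case_option p P j) (\<beta> j) (d j)"
      and h: "h = gamble (case_option Y X) (case_option UNIV B) K \<beta> d"
      by (auto simp: gambles_def)
    define J where "J = Some -` K"
    have "finite J"
      using K by (simp add: J_def finite_vimageI)
    \<comment> \<open>Padding \<open>K\<close> with \<open>None\<close> at stake 0 brings it into the shape \<open>insert None (Some ` J)\<close>.\<close>
    have K': "insert None K = insert None (Some ` J)"
      unfolding J_def by (auto elim: option.exhaust_sel)
    obtain \<beta>' d' where bets': "\<forall>j\<in>insert None K. admissible_bet (case_option p P j) (\<beta>' j) (d' j)"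
      and h': "h = gamble (case_option Y X) (case_option UNIV B) (insert None K) \<beta>' d'"
      using gamble_pad[of "insert None K" K "case_option p P" \<beta> d "case_option Y X" "case_option UNIV B"]
        K bets h by auto
    have option_eta: "case_option (\<beta>' None) (\<lambda>j. \<beta>' (Some j)) = \<beta>'"
        "case_option (d' None) (\<lambda>j. d' (Some j)) = d'"
      by (auto split: option.split)
    have "h = gamble (case_option Y X) (case_option UNIV B) (insert None (Some ` J))
                (case_option (\<beta>' None) (\<lambda>j. \<beta>' (Some j))) (case_option (d' None) (\<lambda>j. d' (Some j)))"
      by (simp add: h' K' option_eta)
    then have "h = (\<lambda>\<omega>. \<beta>' None * (Y \<omega> - d' None) + gamble X B J (\<lambda>j. \<beta>' (Some j)) (\<lambda>j. d' (Some j)) \<omega>)"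
      using \<open>finite J\<close> by (simp add: fun_eq_iff gamble_insert_None)
    moreover have "gamble X B J (\<lambda>j. \<beta>' (Some j)) (\<lambda>j. d' (Some j)) \<in> gambles I X B P"
      using \<open>finite J\<close> K bets' unfolding gambles_def J_def by force
    ultimately show "h \<in> ?R"
      using bets' by auto
  qed
qed

lemma esup_neq_MInf: "esup f \<noteq> -\<infinity>"
proof -
  have "ereal (f undefined) \<le> esup f"
    unfolding esup_def by (rule SUP_upper) auto
  then show ?thesis by auto
qed

lemma esup_add_le: "esup (\<lambda>\<omega>. f \<omega> + g \<omega>) \<le> esup f + esup g"
  unfolding esup_def
proof (rule SUP_least)
  fix \<omega>
  have "ereal (f \<omega>) + ereal (g \<omega>) \<le> (SUP \<omega>. ereal (f \<omega>)) + (SUP \<omega>. ereal (g \<omega>))"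
    by (intro add_mono SUP_upper) auto
  then show "ereal (f \<omega> + g \<omega>) \<le> (SUP \<omega>. ereal (f \<omega>)) + (SUP \<omega>. ereal (g \<omega>))" by simp
qed

lemma esup_add_const: "esup (\<lambda>\<omega>. f \<omega> + d) = esup f + ereal d"
  unfolding esup_def using SUP_ereal_add_left[of UNIV "ereal d" "\<lambda>\<omega>. ereal (f \<omega>)"] by simp

lemma esup_cmult: "0 \<le> t \<Longrightarrow> esup (\<lambda>\<omega>. t * f \<omega>) = ereal t * esup f"
  unfolding esup_def using Sup_ereal_mult_left'[of UNIV t "\<lambda>\<omega>. ereal (f \<omega>)"] by simp

lemma esup_bet_nonneg_iff:
  assumes "t > 0"
  shows "0 \<le> esup (\<lambda>\<omega>. t * (Y \<omega> - c) + g \<omega>) \<longleftrightarrow> ereal c \<le> esup (\<lambda>\<omega>. Y \<omega> + g \<omega> / t)"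
proof -
  have "(\<lambda>\<omega>. t * (Y \<omega> - c) + g \<omega>) = (\<lambda>\<omega>. t * ((Y \<omega> + g \<omega> / t) + - c))"
    using assms by (auto simp: field_simps)
  then have "esup (\<lambda>\<omega>. t * (Y \<omega> - c) + g \<omega>) = ereal t * (esup (\<lambda>\<omega>. Y \<omega> + g \<omega> / t) + ereal (- c))"
    using assms esup_add_const[of "\<lambda>\<omega>. Y \<omega> + g \<omega> / t" "- c"] by (simp add: esup_cmult)
  with assms esup_neq_MInf show ?thesis
    by (cases "esup (\<lambda>\<omega>. Y \<omega> + g \<omega> / t)") (auto simp: zero_le_mult_iff)
qed

definition natural_upper :: "('w \<Rightarrow> real) set \<Rightarrow> ('w \<Rightarrow> real) \<Rightarrow> ereal" where
  "natural_upper G Y = (INF g\<in>G. esup (\<lambda>\<omega>. Y \<omega> + g \<omega>))"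

definition natural_lower :: "('w \<Rightarrow> real) set \<Rightarrow> ('w \<Rightarrow> real) \<Rightarrow> ereal" where
  "natural_lower G Y = - natural_upper G (\<lambda>\<omega>. - Y \<omega>)"

lemma le_natural_upper_iff:
  assumes divide: "\<And>g t. g \<in> G \<Longrightarrow> t > 0 \<Longrightarrow> (\<lambda>\<omega>. g \<omega> / t) \<in> G"
  shows "ereal c \<le> natural_upper G Y \<longleftrightarrow>
    (\<forall>t>0. \<forall>g\<in>G. 0 \<le> esup (\<lambda>\<omega>. t * (Y \<omega> - c) + g \<omega>))"
proof
  assume c: "ereal c \<le> natural_upper G Y"
  show "\<forall>t>0. \<forall>g\<in>G. 0 \<le> esup (\<lambda>\<omega>. t * (Y \<omega> - c) + g \<omega>)"
  proof (intro allI impI ballI)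
    fix t :: real and g assume "t > 0" "g \<in> G"
    then have "natural_upper G Y \<le> esup (\<lambda>\<omega>. Y \<omega> + g \<omega> / t)"
      unfolding natural_upper_def using INF_lower[of "\<lambda>\<omega>. g \<omega> / t" G "\<lambda>h. esup (\<lambda>\<omega>. Y \<omega> + h \<omega>)"]
        divide by simp
    with c have "ereal c \<le> esup (\<lambda>\<omega>. Y \<omega> + g \<omega> / t)"
      by (rule order_trans)
    then show "0 \<le> esup (\<lambda>\<omega>. t * (Y \<omega> - c) + g \<omega>)"
      using esup_bet_nonneg_iff[OF \<open>t > 0\<close>] by blast
  qed
next
  assume bets: "\<forall>t>0. \<forall>g\<in>G. 0 \<le> esup (\<lambda>\<omega>. t * (Y \<omega> - c) + g \<omega>)"
  have "ereal c \<le> esup (\<lambda>\<omega>. Y \<omega> + g \<omega>)" if "g \<in> G" for g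
    using bets[rule_format, of 1 g] that esup_bet_nonneg_iff[of 1 Y c g] by simp
  then show "ereal c \<le> natural_upper G Y"
    unfolding natural_upper_def le_INF_iff by simp
qed

lemma natural_lower_le_iff:
  assumes divide: "\<And>g t. g \<in> G \<Longrightarrow> t > 0 \<Longrightarrow> (\<lambda>\<omega>. g \<omega> / t) \<in> G"
  shows "natural_lower G Y \<le> ereal c \<longleftrightarrow>
    (\<forall>t<0. \<forall>g\<in>G. 0 \<le> esup (\<lambda>\<omega>. t * (Y \<omega> - c) + g \<omega>))"
proof -
  have "natural_lower G Y \<le> ereal c \<longleftrightarrow> ereal (- c) \<le> natural_upper G (\<lambda>\<omega>. - Y \<omega>)"
    unfolding natural_lower_def by (subst ereal_uminus_le_reorder) simp
  also have "\<dots> \<longleftrightarrow> (\<forall>t>0. \<forall>g\<in>G. 0 \<le> esup (\<lambda>\<omega>. t * (- Y \<omega> - - c) + g \<omega>))"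
    by (rule le_natural_upper_iff[OF divide])
  also have "\<dots> \<longleftrightarrow> (\<forall>t<0. \<forall>g\<in>G. 0 \<le> esup (\<lambda>\<omega>. t * (Y \<omega> - c) + g \<omega>))"
  proof -
    have flip: "(\<lambda>\<omega>. t * (- Y \<omega> - - c) + g \<omega>) = (\<lambda>\<omega>. (- t) * (Y \<omega> - c) + g \<omega>)" for t g
      by (simp add: fun_eq_iff algebra_simps)
    have neg_all: "(\<forall>t>0. Q (- t)) \<longleftrightarrow> (\<forall>t<0. Q t)" for Q :: "real \<Rightarrow> bool"
      by (metis neg_0_less_iff_less minus_minus)
    show ?thesis
      by (simp only: flip) (rule neg_all[of "\<lambda>t. \<forall>g\<in>G. 0 \<le> esup (\<lambda>\<omega>. t * (Y \<omega> - c) + g \<omega>)"])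
  qed
  finally show ?thesis .
qed

lemma natural_lower_le_upper:
  assumes nonneg: "\<And>g. g \<in> G \<Longrightarrow> 0 \<le> esup g"
    and add: "\<And>g h. g \<in> G \<Longrightarrow> h \<in> G \<Longrightarrow> (\<lambda>\<omega>. g \<omega> + h \<omega>) \<in> G"
  shows "natural_lower G Y \<le> natural_upper G Y"
proof -
  have "natural_lower G Y = (SUP g\<in>G. - esup (\<lambda>\<omega>. - Y \<omega> + g \<omega>))"
    by (simp add: natural_lower_def natural_upper_def ereal_SUP_uminus_eq)
  also have "\<dots> \<le> natural_upper G Y"
    unfolding natural_upper_def
  proof (intro SUP_least INF_greatest)
  fix g h assume "g \<in> G" "h \<in> G"
  have "0 \<le> esup (\<lambda>\<omega>. g \<omega> + h \<omega>)"
    using add nonneg \<open>g \<in> G\<close> \<open>h \<in> G\<close> by blast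
  also have "(\<lambda>\<omega>. g \<omega> + h \<omega>) = (\<lambda>\<omega>. (Y \<omega> + h \<omega>) + (- Y \<omega> + g \<omega>))"
    by auto
  also have "esup \<dots> \<le> esup (\<lambda>\<omega>. Y \<omega> + h \<omega>) + esup (\<lambda>\<omega>. - Y \<omega> + g \<omega>)"
    by (rule esup_add_le)
  finally show "- esup (\<lambda>\<omega>. - Y \<omega> + g \<omega>) \<le> esup (\<lambda>\<omega>. Y \<omega> + h \<omega>)"
    using esup_neq_MInf
    by (cases "esup (\<lambda>\<omega>. Y \<omega> + h \<omega>)"; cases "esup (\<lambda>\<omega>. - Y \<omega> + g \<omega>)") auto
  qed
  finally show ?thesis .
qed

lemma admissible_bets_nonneg_iff:
  assumes nonneg: "\<And>g. g \<in> G \<Longrightarrow> 0 \<le> esup g"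
    and divide: "\<And>g t. g \<in> G \<Longrightarrow> t > 0 \<Longrightarrow> (\<lambda>\<omega>. g \<omega> / t) \<in> G"
  shows "(\<forall>\<alpha> c. admissible_bet p \<alpha> c \<longrightarrow> (\<forall>g\<in>G. 0 \<le> esup (\<lambda>\<omega>. \<alpha> * (Y \<omega> - c) + g \<omega>)))
    \<longleftrightarrow> p \<in> {natural_lower G Y..natural_upper G Y}"
proof -
  define Q where "Q \<alpha> c \<longleftrightarrow> (\<forall>g\<in>G. 0 \<le> esup (\<lambda>\<omega>. \<alpha> * (Y \<omega> - c) + g \<omega>))" for \<alpha> c
  have Q0: "Q 0 c" for c
    using nonneg by (simp add: Q_def)
  have upper: "ereal c \<le> natural_upper G Y \<longleftrightarrow> (\<forall>\<alpha>>0. Q \<alpha> c)" for c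
    unfolding Q_def by (rule le_natural_upper_iff[OF divide])
  have lower: "natural_lower G Y \<le> ereal c \<longleftrightarrow> (\<forall>\<alpha><0. Q \<alpha> c)" for c
    unfolding Q_def by (rule natural_lower_le_iff[OF divide])
  show ?thesis
  proof (cases p)
    case (real r)
    then have "(\<forall>\<alpha> c. admissible_bet p \<alpha> c \<longrightarrow> Q \<alpha> c) \<longleftrightarrow> (\<forall>\<alpha>. Q \<alpha> r)"
      by (simp add: admissible_bet_def)
    also have "\<dots> \<longleftrightarrow> (\<forall>\<alpha>>0. Q \<alpha> r) \<and> (\<forall>\<alpha><0. Q \<alpha> r)"
      using Q0 by (metis linorder_neqE_linordered_idom)
    finally show ?thesis
      using real upper lower by (simp add: Q_def conj_commute)
  next
    case PInf
    then have "(\<forall>\<alpha> c. admissible_bet p \<alpha> c \<longrightarrow> Q \<alpha> c) \<longleftrightarrow> (\<forall>c. \<forall>\<alpha>>0. Q \<alpha> c)"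
      using Q0 by (auto simp: admissible_bet_def order_le_less)
    also have "\<dots> \<longleftrightarrow> natural_upper G Y = \<infinity>"
      using upper ereal_top by force
    finally show ?thesis
      using PInf by (simp add: Q_def)
  next
    case MInf
    then have "(\<forall>\<alpha> c. admissible_bet p \<alpha> c \<longrightarrow> Q \<alpha> c) \<longleftrightarrow> (\<forall>c. \<forall>\<alpha><0. Q \<alpha> c)"
      using Q0 by (auto simp: admissible_bet_def order_le_less)
    also have "\<dots> \<longleftrightarrow> natural_lower G Y = -\<infinity>"
      using lower ereal_bot by force
    finally show ?thesis
      using MInf by (simp add: Q_def)
  qed
qed

theorem lemma7p1:
  fixes I :: "'i set" and X :: "'i \<Rightarrow> 'w \<Rightarrow> real" and B :: "'i \<Rightarrow> 'w set"
    and P :: "'i \<Rightarrow> ereal" and Y :: "'w \<Rightarrow> real"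
  assumes nonempty: "\<forall>i\<in>I. B i \<noteq> {}"
    and coh: "coherent1 I X B P"
  shows "\<exists>a b :: ereal. a \<le> b \<and>
           (\<forall>p :: ereal.
              coherent1 (insert None (Some ` I)) (case_option Y X) (case_option UNIV B)
                        (case_option p P)
              \<longleftrightarrow> p \<in> {a..b})"
proof -
  let ?G = "gambles I X B P"
  have nonneg: "\<And>g. g \<in> ?G \<Longrightarrow> 0 \<le> esup g"
    using coh coherent1_iff_gambles by blast
  have "coherent1 (insert None (Some ` I)) (case_option Y X) (case_option UNIV B) (case_option p P)
      \<longleftrightarrow> p \<in> {natural_lower ?G Y..natural_upper ?G Y}" for p
  proof -
    have "coherent1 (insert None (Some ` I)) (case_option Y X) (case_option UNIV B) (case_option p P)
        \<longleftrightarrow> (\<forall>\<alpha> c. admissible_bet p \<alpha> c \<longrightarrow> (\<forall>g\<in>?G. 0 \<le> esup (\<lambda>\<omega>. \<alpha> * (Y \<omega> - c) + g \<omega>)))"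
      by (auto simp: coherent1_iff_gambles gambles_insert_None)
    also have "\<dots> \<longleftrightarrow> p \<in> {natural_lower ?G Y..natural_upper ?G Y}"
      by (rule admissible_bets_nonneg_iff[OF nonneg gambles_divide])
    finally show ?thesis .
  qed
  moreover have "natural_lower ?G Y \<le> natural_upper ?G Y"
    by (rule natural_lower_le_upper[OF nonneg gambles_add])
  ultimately show ?thesis
    by blast
qed

end
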